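(* Let $\rho\in(0,1)$ and let $S\in\mathbb{R}^{m\times n}$ be such that the event $\mathcal{E}^m_\rho$ holds, i.e. $\|C_S-I_d\|_2\leqslant\sqrt{\rho}$. Then for every $x\in\mathbb{R}^d$, $|\delta_x-\widetilde\delta_x|\leqslant\sqrt{\rho}\,\widetilde\delta_x$. Consequently, if $S$ is drawn from a random embedding with critical sketch size $m_\delta$ (for a given $\delta\in(0,1)$) and $m>m_\delta$, then with probability at least $1-\delta$ we have $|\delta_x-\widetilde\delta_x|\leqslant\sqrt{m_\delta/m}\,\widetilde\delta_x$ for all $x\in\mathbb{R}^d$.
   Context: Let $A\in\mathbb{R}^{n\times d}$ with $n\geqslant d$, $b\in\mathbb{R}^d$, $\Lambda\in\mathbb{R}^{d\times d}$ diagonal with $\Lambda\succeq I_d$, and $\nu>0$. Set $H=A^\top A+\nu^2\Lambda$, $f(x)=\frac12 x^\top Hx-b^\top x$ and $x^*=H^{-1}b$. For $S\in\mathbb{R}^{m\times n}$ set $H_S=A^\top S^\top SA+\nu^2\Lambda$ and $C_S=H^{-1/2}H_SH^{-1/2}$. For $x\in\mathbb{R}^d$ let $\delta_x=\frac12\|x-x^*\|_H^2$ (with $\|z\|_H^2=z^\top Hz$) and $\widetilde\delta_x=\frac12\nabla f(x)^\top H_S^{-1}\nabla f(x)$. For $\rho>0$, $\mathcal{E}^m_\rho$ denotes the event $\|C_S-I_d\|_2\leqslant\max\{\sqrt\rho,\rho\}$. A random embedding is a family of distributions of random matrices $S\in\mathbb{R}^{m\times n}$, one for each $m\geqslant1$;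 given $\delta\in(0,1)$ its critical sketch size is $m_\delta=\inf\{k\geqslant1:\ \mathbb{P}(\mathcal{E}^m_\rho)\geqslant1-\delta \text{ for all } \rho>0 \text{ and all } m\geqslant k/\rho\}$. *)

theory Defs
  imports "HOL-Probability.Probability"
begin

text \<open>A sketch S in R^{m x n} (m varying) is represented by
 its rows: S :: nat => real^'n, where S i is the i-th row (i < m); rows with index
 >= m are ignored.\<close>

definition diag_mat :: "real^'d^'d \<Rightarrow> bool" where
  "diag_mat M \<longleftrightarrow> (\<forall>i j. i \<noteq> j \<longrightarrow> M $ i $ j = 0)"

definition psd_mat :: "real^'d^'d \<Rightarrow> bool" where
  "psd_mat M \<longleftrightarrow> transpose M = M \<and> (\<forall>x. 0 \<le> x \<bullet> (M *v x))"

definition mat_sqrt :: "real^'d^'d \<Rightarrow> real^'d^'d" where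
  "mat_sqrt M = (THE R. psd_mat R \<and> R ** R = M)"

definition spec_norm :: "real^'d^'d \<Rightarrow> real" where
  "spec_norm M = onorm (\<lambda>x. M *v x)"

definition hess :: "real^'d^'n \<Rightarrow> real^'d^'d \<Rightarrow> real \<Rightarrow> real^'d^'d" where
  "hess A Lam nu = transpose A ** A + (nu^2) *\<^sub>R Lam"

text \<open>(SA)^T (SA), where row i of SA is (S i) v* A.\<close>
definition sketch_gram :: "nat \<Rightarrow> (nat \<Rightarrow> real^'n) \<Rightarrow> real^'d^'n \<Rightarrow> real^'d^'d" where
  "sketch_gram m S A = (\<chi> j k. \<Sum>i<m. ((S i) v* A) $ j * ((S i) v* A) $ k)"

definition hess_S :: "real^'d^'n \<Rightarrow> real^'d^'d \<Rightarrow> real \<Rightarrow> nat \<Rightarrow> (nat \<Rightarrow> real^'n) \<Rightarrow> real^'d^'d" where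
  "hess_S A Lam nu m S = sketch_gram m S A + (nu^2) *\<^sub>R Lam"

definition C_S :: "real^'d^'n \<Rightarrow> real^'d^'d \<Rightarrow> real \<Rightarrow> nat \<Rightarrow> (nat \<Rightarrow> real^'n) \<Rightarrow> real^'d^'d" where
  "C_S A Lam nu m S =
     (let Hmh = mat_sqrt (matrix_inv (hess A Lam nu)) in Hmh ** hess_S A Lam nu m S ** Hmh)"

definition event_E :: "real^'d^'n \<Rightarrow> real^'d^'d \<Rightarrow> real \<Rightarrow> nat \<Rightarrow> real \<Rightarrow> (nat \<Rightarrow> real^'n) \<Rightarrow> bool" where
  "event_E A Lam nu m rho S \<longleftrightarrow> spec_norm (C_S A Lam nu m S - mat 1) \<le> max (sqrt rho) rho"

definition fobj :: "real^'d^'n \<Rightarrow> real^'d^'d \<Rightarrow> real \<Rightarrow> real^'d \<Rightarrow> real^'d \<Rightarrow> real" where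
  "fobj A Lam nu b x = (1/2) * (x \<bullet> (hess A Lam nu *v x)) - b \<bullet> x"

definition grad_f :: "real^'d^'n \<Rightarrow> real^'d^'d \<Rightarrow> real \<Rightarrow> real^'d \<Rightarrow> real^'d \<Rightarrow> real^'d" where
  "grad_f A Lam nu b x = hess A Lam nu *v x - b"

definition xstar :: "real^'d^'n \<Rightarrow> real^'d^'d \<Rightarrow> real \<Rightarrow> real^'d \<Rightarrow> real^'d" where
  "xstar A Lam nu b = matrix_inv (hess A Lam nu) *v b"

definition delta :: "real^'d^'n \<Rightarrow> real^'d^'d \<Rightarrow> real \<Rightarrow> real^'d \<Rightarrow> real^'d \<Rightarrow> real" where
  "delta A Lam nu b x =
     (let z = x - xstar A Lam nu b in (1/2) * (z \<bullet> (hess A Lam nu *v z)))"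

definition delta_tilde :: "real^'d^'n \<Rightarrow> real^'d^'d \<Rightarrow> real \<Rightarrow> real^'d \<Rightarrow> nat \<Rightarrow> (nat \<Rightarrow> real^'n) \<Rightarrow> real^'d \<Rightarrow> real" where
  "delta_tilde A Lam nu b m S x =
     (let g = grad_f A Lam nu b x in (1/2) * (g \<bullet> (matrix_inv (hess_S A Lam nu m S) *v g)))"

text \<open>"P(E) >= p", read as: E contains a measurable event of probability >= p
 (coincides with the usual meaning when E is measurable).\<close>
definition prob_atleast :: "'a measure \<Rightarrow> 'a set \<Rightarrow> real \<Rightarrow> bool" where
  "prob_atleast M E p \<longleftrightarrow> (\<exists>F\<in>sets M. F \<subseteq> E \<and> measure M F \<ge> p)"

text \<open>A random embedding: D m is the distribution of the m x n sketch (rows representation).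
 The set of admissible k in the definition of the critical sketch size.\<close>
definition crit_set :: "real^'d^'n \<Rightarrow> real^'d^'d \<Rightarrow> real \<Rightarrow> (nat \<Rightarrow> (nat \<Rightarrow> real^'n) measure) \<Rightarrow> real \<Rightarrow> nat set" where
  "crit_set A Lam nu D dl = {k. k \<ge> 1 \<and>
     (\<forall>rho>0. \<forall>m::nat. m \<ge> 1 \<longrightarrow> real m \<ge> real k / rho \<longrightarrow>
        prob_atleast (D m) {S. event_E A Lam nu m rho S} (1 - dl))}"

definition crit_size :: "real^'d^'n \<Rightarrow> real^'d^'d \<Rightarrow> real \<Rightarrow> (nat \<Rightarrow> (nat \<Rightarrow> real^'n) measure) \<Rightarrow> real \<Rightarrow> nat" where
  "crit_size A Lam nu D dl = Inf (crit_set A Lam nu D dl)"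

end

(*
  Let R = H^(-1/2), g = grad f(x), v = R g and w = R^(-1) H_S^(-1) g.  Then 2 delta_x = v.v,
  2 tilde-delta_x = w.v and C_S w = v, so on the event |v - w| <= sqrt rho |w|.  For e = v - w
  the difference v.v - w.v = e.w + |e|^2 lies within sqrt rho (|w|^2 + e.w) = sqrt rho w.v
  by Cauchy-Schwarz.  The probabilistic claim is the instance rho = m_delta / m of the
  definition of the critical sketch size.  Since H^(-1/2) is defined as the unique positive
  semidefinite square root, existence and uniqueness of such roots are derived from the
  spectral theorem for real symmetric matrices, obtained by maximising the Rayleigh quotient
  on invariant subspaces.
*)

theory Submission
  imports Defs
begin

lemma symmetric_matrix_inner:
  fixes M :: "real^'d^'d"
  assumes "transpose M = M"
  shows "x \<bullet> (M *v y) = (M *v x) \<bullet> y"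
  by (metis assms dot_lmul_matrix transpose_transpose vector_transpose_matrix)

lemma transpose_eq_selfI:
  fixes M :: "real^'d^'d"
  assumes "\<And>x y. x \<bullet> (M *v y) = (M *v x) \<bullet> y"
  shows "transpose M = M"
proof -
  have "x \<bullet> (transpose M *v y) = x \<bullet> (M *v y)" for x y
    by (metis assms dot_lmul_matrix inner_commute vector_transpose_matrix)
  then have "transpose M *v y = M *v y" for y
    by (metis vector_eq_ldot)
  then show ?thesis by (simp add: matrix_eq)
qed

lemma quadratic_nonneg_imp_linear_coeff_eq_0:
  fixes a c :: real
  assumes "\<And>t. 0 \<le> a * t + c * t^2"
  shows "a = 0"
proof -
  define d where "d = 1 + \<bar>c\<bar>"
  have d: "0 < d" "c < d" by (auto simp: d_def)
  define t where "t = - a / d"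
  have dt: "d * t = - a" using d by (simp add: t_def)
  have "d^2 * (a * t + c * t^2) = a * (d * t) * d + c * (d * t)^2"
    by (simp add: power2_eq_square algebra_simps)
  also have "\<dots> = a^2 * (c - d)"
    by (simp add: dt power2_eq_square algebra_simps)
  finally have "0 \<le> a^2 * (c - d)"
    using assms[of t] by (metis zero_le_mult_iff zero_le_power2)
  then have "a^2 \<le> 0" using d by (simp add: zero_le_mult_iff)
  then show ?thesis by simp
qed

lemma psd_form_eq_0_imp_mult_eq_0:
  fixes N :: "real^'d^'d"
  assumes sym: "transpose N = N" and psd: "\<And>y. y \<in> V \<Longrightarrow> 0 \<le> y \<bullet> (N *v y)"
    and sub: "subspace V" and x: "x \<in> V" "N *v x \<in> V" and x0: "x \<bullet> (N *v x) = 0"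
  shows "N *v x = 0"
proof -
  define w where "w = N *v x"
  have "0 \<le> (2 * (w \<bullet> w)) * t + (w \<bullet> (N *v w)) * t^2" for t
  proof -
    have "x + t *\<^sub>R w \<in> V" using x sub by (simp add: w_def subspace_add subspace_scale)
    then have "0 \<le> (x + t *\<^sub>R w) \<bullet> (N *v (x + t *\<^sub>R w))" by (rule psd)
    also have "\<dots> = (2 * (w \<bullet> w)) * t + (w \<bullet> (N *v w)) * t^2"
      using x0 symmetric_matrix_inner[OF sym, of x w]
      by (simp add: w_def matrix_vector_right_distrib matrix_vector_mult_scaleR inner_add_left
          inner_add_right inner_commute power2_eq_square algebra_simps)
    finally show ?thesis .
  qed
  then have "2 * (w \<bullet> w) = 0" by (rule quadratic_nonneg_imp_linear_coeff_eq_0)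
  then show ?thesis by (simp add: w_def)
qed

lemma symmetric_matrix_has_eigenvector_in:
  fixes M :: "real^'d^'d"
  assumes sym: "transpose M = M" and sub: "subspace V" and inv: "\<And>x. x \<in> V \<Longrightarrow> M *v x \<in> V"
    and ne: "V \<noteq> {0}"
  obtains x l where "x \<in> V" "norm x = 1" "M *v x = l *\<^sub>R x"
proof -
  let ?K = "V \<inter> sphere 0 1"
  let ?q = "\<lambda>y. y \<bullet> (M *v y)"
  have compact: "compact ?K"
    using compact_Int_closed[OF compact_sphere closed_subspace[OF sub]] by (simp add: Int_commute)
  obtain v where "v \<in> V" "v \<noteq> 0" using ne sub subspace_0 by blast
  then have "(1 / norm v) *\<^sub>R v \<in> ?K" using sub by (simp add: subspace_scale)
  then have nonempty: "?K \<noteq> {}" by blast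
  have cont: "continuous_on ?K ?q"
    by (intro continuous_intros linear_continuous_on matrix_vector_mul_bounded_linear)
  obtain x where x: "x \<in> ?K" and max: "\<forall>y\<in>?K. ?q y \<le> ?q x"
    using continuous_attains_sup[OF compact nonempty cont] by blast
  define l where "l = ?q x"
  have rayleigh: "?q y \<le> l * (y \<bullet> y)" if "y \<in> V" for y
  proof (cases "y = 0")
    case False
    have "(1 / norm y) *\<^sub>R y \<in> ?K" using that False sub by (simp add: subspace_scale)
    then have "?q ((1 / norm y) *\<^sub>R y) \<le> l" using max unfolding l_def by blast
    then have "?q y / (norm y)^2 \<le> l"
      by (simp add: matrix_vector_mult_scaleR power2_eq_square)
    then show ?thesis
      using False by (simp add: pos_divide_le_eq power2_norm_eq_inner)
  qed simp
  \<comment> \<open>By maximality of the Rayleigh quotient, \<open>l I - M\<close> is positive semidefinite on \<open>V\<close>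
    and its quadratic form vanishes at \<open>x\<close>.\<close>
  define N where "N = l *\<^sub>R mat 1 - M"
  have Nv: "N *v y = l *\<^sub>R y - M *v y" for y
    by (simp add: N_def matrix_vector_mult_diff_rdistrib flip: matrix_scaleR_vector_ac)
  have "N *v x = 0"
  proof (rule psd_form_eq_0_imp_mult_eq_0[OF _ _ sub])
    show "transpose N = N"
      by (rule transpose_eq_selfI)
        (simp add: Nv inner_diff_left inner_diff_right symmetric_matrix_inner[OF sym])
    show "0 \<le> y \<bullet> (N *v y)" if "y \<in> V" for y
      using rayleigh[OF that] by (simp add: Nv inner_diff_right)
    show "x \<in> V" "N *v x \<in> V" using x inv sub by (auto simp: Nv subspace_diff subspace_scale)
    show "x \<bullet> (N *v x) = 0"
      using x by (simp add: Nv l_def inner_diff_right power2_norm_eq_inner[symmetric])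
  qed
  then show ?thesis using that[of x l] x by (simp add: Nv)
qed

lemma symmetric_matrix_orthonormal_eigenbasis_of:
  fixes M :: "real^'d^'d"
  assumes sym: "transpose M = M" and "subspace V" and "\<And>x. x \<in> V \<Longrightarrow> M *v x \<in> V"
  shows "\<exists>B. B \<subseteq> V \<and> finite B \<and> pairwise orthogonal B \<and> (\<forall>b\<in>B. norm b = 1) \<and>
    (\<forall>b\<in>B. \<exists>l. M *v b = l *\<^sub>R b) \<and> span B = V"
  using assms(2,3)
proof (induction "dim V" arbitrary: V rule: less_induct)
  case less
  show ?case
  proof (cases "V = {0}")
    case True
    then show ?thesis by (intro exI[of _ "{}"]) auto
  next
    case False
    obtain x l where xV: "x \<in> V" and nx: "norm x = 1" and eig: "M *v x = l *\<^sub>R x"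
      using symmetric_matrix_has_eigenvector_in[OF sym less.prems False] by blast
    have xx: "x \<bullet> x = 1" using nx by (simp add: power2_norm_eq_inner[symmetric])
    define W where "W = {y\<in>V. x \<bullet> y = 0}"
    have subW: "subspace W"
      using less.prems(1) unfolding W_def subspace_def by (auto simp: inner_add_right)
    have invW: "M *v y \<in> W" if "y \<in> W" for y
    proof -
      have "x \<bullet> (M *v y) = l * (x \<bullet> y)" by (simp add: symmetric_matrix_inner[OF sym] eig)
      then show ?thesis using that less.prems(2) by (simp add: W_def)
    qed
    have "W \<subseteq> V" "x \<in> V - W" using xV xx by (auto simp: W_def)
    then have "W \<subset> V" by blast
    then have "dim W < dim V"
      using subW less.prems(1) by (metis dim_psubset span_eq_iff)
    then obtain B' where B': "B' \<subseteq> W" "finite B'" "pairwise orthogonal B'"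
        "\<forall>b\<in>B'. norm b = 1" "\<forall>b\<in>B'. \<exists>l. M *v b = l *\<^sub>R b" "span B' = W"
      using less.hyps[OF _ subW invW] by blast
    have "span (insert x B') = V"
    proof
      show "span (insert x B') \<subseteq> V"
        using B'(1) xV less.prems(1) by (intro span_minimal) (auto simp: W_def)
      show "V \<subseteq> span (insert x B')"
      proof
        fix v assume v: "v \<in> V"
        have "v - (x \<bullet> v) *\<^sub>R x \<in> W"
          using v xV xx less.prems(1)
          by (simp add: W_def subspace_diff subspace_scale inner_diff_right)
        then have "v - (x \<bullet> v) *\<^sub>R x \<in> span (insert x B')"
          using B'(6) span_mono[of B' "insert x B'"] by blast
        moreover have "(x \<bullet> v) *\<^sub>R x \<in> span (insert x B')"
          by (simp add: span_base span_scale)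
        ultimately have "(v - (x \<bullet> v) *\<^sub>R x) + (x \<bullet> v) *\<^sub>R x \<in> span (insert x B')"
          by (rule span_add)
        then show "v \<in> span (insert x B')" by simp
      qed
    qed
    moreover have "pairwise orthogonal (insert x B')"
      using B'(1,3) by (auto simp: pairwise_insert orthogonal_def W_def inner_commute)
    ultimately show ?thesis
      using B' xV nx eig by (intro exI[of _ "insert x B'"]) (auto simp: W_def)
  qed
qed

lemma psd_mat_orthonormal_eigenbasis:
  fixes M :: "real^'d^'d"
  assumes "psd_mat M"
  obtains B lam where "finite B" "pairwise orthogonal B" "\<forall>b\<in>B. norm b = 1" "span B = UNIV"
    "\<And>b. b \<in> B \<Longrightarrow> M *v b = lam b *\<^sub>R b" "\<And>b. 0 \<le> lam b"
proof -
  have sym: "transpose M = M" and pos: "\<And>x. 0 \<le> x \<bullet> (M *v x)"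
    using assms by (auto simp: psd_mat_def)
  obtain B where B: "finite B" "pairwise orthogonal B" "\<forall>b\<in>B. norm b = 1"
    "\<forall>b\<in>B. \<exists>l. M *v b = l *\<^sub>R b" "span B = UNIV"
    using symmetric_matrix_orthonormal_eigenbasis_of[OF sym subspace_UNIV UNIV_I] by blast
  have eig: "M *v b = (b \<bullet> (M *v b)) *\<^sub>R b" if b: "b \<in> B" for b
  proof -
    obtain l where "M *v b = l *\<^sub>R b" using B(4) b by blast
    moreover have "b \<bullet> b = 1" using B(3) b by (simp add: norm_eq_1)
    ultimately show ?thesis by simp
  qed
  show ?thesis by (rule that[OF B(1,2,3,5) eig pos])
qed

lemma orthonormal_inner:
  assumes "pairwise orthogonal B" "\<forall>b\<in>B. norm b = 1" "b \<in> B" "b' \<in> B"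
  shows "b' \<bullet> b = (if b' = b then 1 else (0::real))"
  using assms by (auto simp: pairwise_def orthogonal_def power2_norm_eq_inner[symmetric])

lemma matrix_eq_on_spanning_set:
  fixes A A' :: "real^'n^'m"
  assumes "span B = UNIV" and "\<And>b. b \<in> B \<Longrightarrow> A *v b = A' *v b"
  shows "A = A'"
  unfolding matrix_eq
proof
  fix x :: "real^'n"
  show "A *v x = A' *v x"
    using linear_eq_on_span[of "\<lambda>x. A *v x" "\<lambda>x. A' *v x" B x] assms by simp
qed

lemma psd_mat_sqrt_on_eigenvector:
  fixes R M :: "real^'d^'d"
  assumes R: "psd_mat R" and RR: "R ** R = M" and eig: "M *v b = mu *\<^sub>R b" and mu: "0 \<le> mu"
  shows "R *v b = sqrt mu *\<^sub>R b"
proof -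
  have sym: "transpose R = R" and pos: "\<And>x. 0 \<le> x \<bullet> (R *v x)"
    using R by (auto simp: psd_mat_def)
  define s where "s = sqrt mu"
  have s: "0 \<le> s" "s * s = mu" using mu by (auto simp: s_def)
  define e where "e = R *v b - s *\<^sub>R b"
  have "R *v (R *v b) = mu *\<^sub>R b" using RR eig by (simp add: matrix_vector_mul_assoc)
  \<comment> \<open>\<open>e\<close> is an eigenvector of the positive semidefinite \<open>R\<close> for the eigenvalue \<open>-s \<le> 0\<close>.\<close>
  then have Re: "R *v e = - s *\<^sub>R e"
    by (simp add: e_def matrix_vector_mult_diff_distrib matrix_vector_mult_scaleR
        algebra_simps s(2)[symmetric])
  have "0 \<le> e \<bullet> (R *v e)" by (rule pos)
  moreover have "e \<bullet> (R *v e) \<le> 0" using s by (simp add: Re)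
  ultimately have "R *v e = 0"
    by (intro psd_form_eq_0_imp_mult_eq_0[OF sym pos subspace_UNIV]) auto
  with Re have "s *\<^sub>R e = 0" by simp
  have "e \<bullet> e = (R *v b - s *\<^sub>R b) \<bullet> e" by (simp only: e_def)
  also have "\<dots> = b \<bullet> (R *v e) - b \<bullet> (s *\<^sub>R e)"
    by (simp add: inner_diff_left symmetric_matrix_inner[OF sym])
  also have "\<dots> = 0"
    by (simp only: \<open>R *v e = 0\<close> \<open>s *\<^sub>R e = 0\<close> inner_zero_right diff_self)
  finally have "e = 0" by simp
  then show ?thesis by (simp add: e_def s_def)
qed

lemma psd_mat_sqrt_exists:
  fixes M :: "real^'d^'d"
  assumes "psd_mat M"
  shows "\<exists>R. psd_mat R \<and> R ** R = M"
proof -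
  obtain B lam where B: "finite B" "pairwise orthogonal B" "\<forall>b\<in>B. norm b = 1" "span B = UNIV"
    and eig: "\<And>b. b \<in> B \<Longrightarrow> M *v b = lam b *\<^sub>R b" and lam: "\<And>b. 0 \<le> lam b"
    using psd_mat_orthonormal_eigenbasis[OF assms] by metis
  define r where "r x = (\<Sum>b\<in>B. (sqrt (lam b) * (b \<bullet> x)) *\<^sub>R b)" for x
  have "linear r"
  proof (rule linearI)
    show "r (x + y) = r x + r y" for x y
      by (simp add: r_def inner_add_right distrib_left scaleR_add_left sum.distrib)
    show "r (c *\<^sub>R x) = c *\<^sub>R r x" for c x
      unfolding r_def scaleR_sum_right by (rule sum.cong) (simp_all add: mult.left_commute)
  qed
  define R where "R = matrix r"
  have Rx: "R *v x = r x" for x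
    using \<open>linear r\<close> by (simp add: R_def matrix_works)
  have Rb: "R *v b = sqrt (lam b) *\<^sub>R b" if b: "b \<in> B" for b
  proof -
    have "r b = (\<Sum>b'\<in>B. if b' = b then sqrt (lam b) *\<^sub>R b else 0)"
      unfolding r_def by (rule sum.cong) (auto simp: orthonormal_inner[OF B(2,3) b])
    then show ?thesis using B(1) b by (simp add: Rx)
  qed
  have R_form: "x \<bullet> (R *v y) = (\<Sum>b\<in>B. sqrt (lam b) * (b \<bullet> x) * (b \<bullet> y))" for x y
    by (simp add: Rx r_def inner_sum_right inner_commute mult_ac)
  have "transpose R = R"
    by (rule transpose_eq_selfI) (simp add: R_form inner_commute[of "R *v _"] mult_ac)
  moreover have "0 \<le> x \<bullet> (R *v x)" for x
    unfolding R_form by (rule sum_nonneg) (simp add: mult.assoc lam)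
  moreover have "R ** R = M"
  proof (rule matrix_eq_on_spanning_set[OF B(4)])
    fix b assume "b \<in> B"
    then show "(R ** R) *v b = M *v b"
      by (simp add: Rb eig lam matrix_vector_mul_assoc[symmetric] matrix_vector_mult_scaleR)
  qed
  ultimately show ?thesis by (auto simp: psd_mat_def)
qed

lemma psd_mat_sqrt_unique:
  fixes M R R' :: "real^'d^'d"
  assumes "psd_mat M" "psd_mat R" "R ** R = M" "psd_mat R'" "R' ** R' = M"
  shows "R = R'"
proof -
  obtain B lam where "span B = UNIV"
    and eig: "\<And>b. b \<in> B \<Longrightarrow> M *v b = lam b *\<^sub>R b" and lam: "\<And>b. 0 \<le> lam b"
    using psd_mat_orthonormal_eigenbasis[OF assms(1)] by metis
  then show ?thesis
    using psd_mat_sqrt_on_eigenvector[OF assms(2,3) eig lam]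
      psd_mat_sqrt_on_eigenvector[OF assms(4,5) eig lam]
    by (intro matrix_eq_on_spanning_set) auto
qed

lemma psd_mat_mat_sqrt:
  fixes M :: "real^'d^'d"
  assumes "psd_mat M"
  shows "psd_mat (mat_sqrt M)" "mat_sqrt M ** mat_sqrt M = M"
proof -
  have "\<exists>!R. psd_mat R \<and> R ** R = M"
    using psd_mat_sqrt_exists[OF assms] psd_mat_sqrt_unique[OF assms] by blast
  from theI'[OF this] show "psd_mat (mat_sqrt M)" "mat_sqrt M ** mat_sqrt M = M"
    by (simp_all add: mat_sqrt_def)
qed

definition pos_def_mat :: "real^'d^'d \<Rightarrow> bool" where
  "pos_def_mat M \<longleftrightarrow> transpose M = M \<and> (\<exists>c>0. \<forall>x. c * (x \<bullet> x) \<le> x \<bullet> (M *v x))"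

lemma invertible_matrix_inv_cancel:
  fixes M :: "real^'d^'d"
  assumes "invertible M"
  shows "M *v (matrix_inv M *v x) = x" "matrix_inv M *v (M *v x) = x"
proof -
  have "M ** matrix_inv M = mat 1 \<and> matrix_inv M ** M = mat 1"
    using assms unfolding invertible_def matrix_inv_def by (rule someI_ex)
  then show "M *v (matrix_inv M *v x) = x" "matrix_inv M *v (M *v x) = x"
    by (simp_all add: matrix_vector_mul_assoc)
qed

lemma pos_def_mat_invertible:
  fixes M :: "real^'d^'d"
  assumes "pos_def_mat M"
  shows "invertible M"
proof -
  obtain c where c: "0 < c" and pos: "\<And>x. c * (x \<bullet> x) \<le> x \<bullet> (M *v x)"
    using assms by (auto simp: pos_def_mat_def)
  have "x = 0" if "M *v x = 0" for x
  proof -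
    have "c * (x \<bullet> x) \<le> 0" using pos[of x] that by simp
    then show "x = 0" using c by (metis inner_gt_zero_iff mult_pos_pos not_le)
  qed
  then show ?thesis
    using matrix_left_invertible_ker invertible_left_inverse by blast
qed

lemma pos_def_mat_psd_inverse:
  fixes M :: "real^'d^'d"
  assumes "pos_def_mat M"
  shows "psd_mat (matrix_inv M)"
proof -
  let ?N = "matrix_inv M"
  have sym: "transpose M = M" and pos: "\<And>x. 0 \<le> x \<bullet> (M *v x)"
    using assms unfolding pos_def_mat_def by (auto intro: order_trans[rotated])
  note cancel = invertible_matrix_inv_cancel[OF pos_def_mat_invertible[OF assms]]
  have "x \<bullet> (?N *v y) = (?N *v x) \<bullet> y" for x y
    using symmetric_matrix_inner[OF sym, of "?N *v x" "?N *v y"] by (simp add: cancel)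
  then have "transpose ?N = ?N" by (rule transpose_eq_selfI)
  moreover have "0 \<le> x \<bullet> (?N *v x)" for x
    using pos[of "?N *v x"] by (simp add: cancel inner_commute)
  ultimately show ?thesis by (simp add: psd_mat_def)
qed

lemma pos_def_mat_add_psd:
  fixes G L :: "real^'d^'d"
  assumes "psd_mat G" "pos_def_mat L"
  shows "pos_def_mat (G + L)"
proof -
  have symG: "transpose G = G" and posG: "\<And>x. 0 \<le> x \<bullet> (G *v x)"
    using assms(1) by (auto simp: psd_mat_def)
  obtain c where symL: "transpose L = L" and c: "0 < c"
    and posL: "\<And>x. c * (x \<bullet> x) \<le> x \<bullet> (L *v x)"
    using assms(2) by (auto simp: pos_def_mat_def)
  have "transpose (G + L) = G + L"
    by (rule transpose_eq_selfI) (simp add: matrix_vector_mult_add_rdistrib inner_add_left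
        inner_add_right symmetric_matrix_inner[OF symG] symmetric_matrix_inner[OF symL])
  moreover have "c * (x \<bullet> x) \<le> x \<bullet> ((G + L) *v x)" for x
    using posG[of x] posL[of x] by (simp add: matrix_vector_mult_add_rdistrib inner_add_right)
  ultimately show ?thesis using c by (auto simp: pos_def_mat_def)
qed

lemma pos_def_mat_scaled_diag:
  fixes Lam :: "real^'d^'d"
  assumes diag: "diag_mat Lam" and ge1: "\<forall>i. Lam $ i $ i \<ge> 1" and "nu > 0"
  shows "pos_def_mat (nu^2 *\<^sub>R Lam)"
proof -
  have Lx: "(Lam *v x) $ i = Lam $ i $ i * x $ i" for x i
  proof -
    have "(Lam *v x) $ i = (\<Sum>j\<in>UNIV. Lam $ i $ j * x $ j)"
      by (simp add: matrix_vector_mult_def)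
    also have "\<dots> = (\<Sum>j\<in>UNIV. if j = i then Lam $ i $ i * x $ i else 0)"
      by (rule sum.cong) (use diag in \<open>auto simp: diag_mat_def\<close>)
    finally show ?thesis by simp
  qed
  have "transpose Lam = Lam"
    using diag unfolding transpose_def diag_mat_def vec_eq_iff by (metis vec_lambda_beta)
  moreover have "x \<bullet> x \<le> x \<bullet> (Lam *v x)" for x
  proof -
    have "x \<bullet> x = (\<Sum>i\<in>UNIV. 1 * (x $ i * x $ i))" by (simp add: inner_vec_def)
    also have "\<dots> \<le> (\<Sum>i\<in>UNIV. Lam $ i $ i * (x $ i * x $ i))"
      using ge1 by (intro sum_mono mult_right_mono) auto
    also have "\<dots> = x \<bullet> (Lam *v x)" by (simp add: inner_vec_def Lx mult_ac)
    finally show ?thesis .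
  qed
  ultimately show ?thesis
    using \<open>nu > 0\<close> by (auto simp: pos_def_mat_def transpose_scalar
        simp flip: scaleR_matrix_vector_assoc intro!: exI[of _ "nu^2"])
qed

lemma psd_mat_transpose_mult_self:
  fixes A :: "real^'d^'n"
  shows "psd_mat (transpose A ** A)"
proof -
  have form: "x \<bullet> ((transpose A ** A) *v y) = (A *v x) \<bullet> (A *v y)" for x y
    by (metis dot_lmul_matrix matrix_vector_mul_assoc vector_transpose_matrix)
  show ?thesis
    unfolding psd_mat_def
    using transpose_eq_selfI[of "transpose A ** A"] by (simp add: form inner_commute)
qed

lemma sketch_gram_form:
  fixes A :: "real^'d^'n"
  shows "x \<bullet> (sketch_gram m S A *v y) = (\<Sum>i<m. ((S i v* A) \<bullet> x) * ((S i v* A) \<bullet> y))"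
proof -
  let ?r = "\<lambda>i. S i v* A"
  have "x \<bullet> (sketch_gram m S A *v y) =
     (\<Sum>j\<in>UNIV. \<Sum>k\<in>UNIV. \<Sum>i<m. (?r i $ j * x $ j) * (?r i $ k * y $ k))"
    by (simp add: inner_vec_def matrix_vector_mult_def sketch_gram_def sum_distrib_left
        sum_distrib_right mult_ac)
  also have "\<dots> = (\<Sum>i<m. \<Sum>j\<in>UNIV. \<Sum>k\<in>UNIV. (?r i $ j * x $ j) * (?r i $ k * y $ k))"
    by (rule trans[OF sum.cong[OF refl sum.swap] sum.swap])
  also have "\<dots> = (\<Sum>i<m. (?r i \<bullet> x) * (?r i \<bullet> y))"
    by (simp add: inner_vec_def sum_product)
  finally show ?thesis .
qed

lemma psd_mat_sketch_gram:
  fixes A :: "real^'d^'n"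
  shows "psd_mat (sketch_gram m S A)"
  unfolding psd_mat_def
  using transpose_eq_selfI[of "sketch_gram m S A"]
  by (simp add: sketch_gram_form inner_commute mult.commute sum_nonneg)

lemma pos_def_mat_hess:
  assumes "diag_mat Lam" "\<forall>i. Lam $ i $ i \<ge> 1" "nu > 0"
  shows "pos_def_mat (hess A Lam nu)"
  unfolding hess_def
  by (rule pos_def_mat_add_psd[OF psd_mat_transpose_mult_self pos_def_mat_scaled_diag[OF assms]])

lemma pos_def_mat_hess_S:
  assumes "diag_mat Lam" "\<forall>i. Lam $ i $ i \<ge> 1" "nu > 0"
  shows "pos_def_mat (hess_S A Lam nu m S)"
  unfolding hess_S_def
  by (rule pos_def_mat_add_psd[OF psd_mat_sketch_gram pos_def_mat_scaled_diag[OF assms]])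

lemma inner_relative_error:
  fixes v w :: "'a::real_inner"
  assumes close: "norm (v - w) \<le> s * norm w" and "0 \<le> s" "s \<le> 1"
  shows "\<bar>v \<bullet> v - w \<bullet> v\<bar> \<le> s * (w \<bullet> v)"
proof -
  define e where "e = v - w"
  define n a t where "n = norm w" and "a = norm e" and "t = w \<bullet> e"
  have v: "v = w + e" by (simp add: e_def)
  have lhs: "v \<bullet> v - w \<bullet> v = t + a^2"
    by (simp add: v t_def a_def inner_add_left inner_add_right inner_commute power2_norm_eq_inner)
  have rhs: "w \<bullet> v = n^2 + t"
    by (simp add: v t_def n_def inner_add_right power2_norm_eq_inner)
  have t: "\<bar>t\<bar> \<le> n * a" unfolding t_def n_def a_def by (rule Cauchy_Schwarz_ineq2)
  have a: "0 \<le> a" "a \<le> s * n" using close by (simp_all add: a_def n_def e_def)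
  have "0 \<le> n" by (simp add: n_def)
  have "s * n \<le> n" using \<open>s \<le> 1\<close> \<open>0 \<le> n\<close> mult_right_mono[of s 1 n] by simp
  have "t + a^2 \<le> s * (n^2 + t)"
  proof -
    have "(1 - s) * t \<le> (1 - s) * (n * a)" using t \<open>s \<le> 1\<close> by (intro mult_left_mono) auto
    moreover have "(a - s * n) * (a + n) \<le> 0" using a \<open>0 \<le> n\<close> by (intro mult_nonpos_nonneg) auto
    ultimately show ?thesis by (simp add: algebra_simps power2_eq_square)
  qed
  moreover have "- (t + a^2) \<le> s * (n^2 + t)"
  proof -
    have "(1 + s) * - (n * a) \<le> (1 + s) * t" using t \<open>0 \<le> s\<close> by (intro mult_left_mono) auto
    moreover have "0 \<le> (a - n) * (a - s * n)"
      using a \<open>s * n \<le> n\<close> by (intro mult_nonpos_nonpos) auto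
    ultimately show ?thesis by (simp add: algebra_simps power2_eq_square)
  qed
  ultimately have "\<bar>t + a^2\<bar> \<le> s * (n^2 + t)" by (simp add: abs_le_iff)
  then show ?thesis by (subst lhs, subst rhs)
qed

lemma inverse_form_relative_error:
  fixes H H' :: "real^'d^'d"
  assumes H: "pos_def_mat H" and H': "pos_def_mat H'"
    and C: "spec_norm (mat_sqrt (matrix_inv H) ** H' ** mat_sqrt (matrix_inv H) - mat 1) \<le> s"
    and s: "0 \<le> s" "s \<le> 1"
  shows "\<bar>g \<bullet> (matrix_inv H *v g) - g \<bullet> (matrix_inv H' *v g)\<bar> \<le> s * (g \<bullet> (matrix_inv H' *v g))"
proof -
  define R where "R = mat_sqrt (matrix_inv H)"
  note R = psd_mat_mat_sqrt[OF pos_def_mat_psd_inverse[OF H], folded R_def]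
  have symR: "transpose R = R" using R(1) by (simp add: psd_mat_def)
  have RR: "R *v (R *v y) = matrix_inv H *v y" for y
    using R(2) by (simp add: matrix_vector_mul_assoc)
  note cancel = invertible_matrix_inv_cancel[OF pos_def_mat_invertible[OF H]]
  note cancel' = invertible_matrix_inv_cancel[OF pos_def_mat_invertible[OF H']]
  define v where "v = R *v g"
  \<comment> \<open>\<open>R H\<close> inverts \<open>R\<close>, so \<open>w = R\<^sup>-\<^sup>1 H'\<^sup>-\<^sup>1 g\<close> solves \<open>C w = v\<close>.\<close>
  define w where "w = R *v (H *v (matrix_inv H' *v g))"
  have Rw: "R *v w = matrix_inv H' *v g" by (simp add: w_def RR cancel)
  have "(R ** H' ** R) *v w = v"
    by (simp add: v_def Rw cancel' flip: matrix_vector_mul_assoc)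
  then have "(R ** H' ** R - mat 1) *v w = v - w"
    by (simp add: matrix_vector_mult_diff_rdistrib)
  then have "norm (v - w) \<le> spec_norm (R ** H' ** R - mat 1) * norm w"
    unfolding spec_norm_def by (metis matrix_vector_mul_bounded_linear onorm)
  also have "\<dots> \<le> s * norm w" using C by (simp add: R_def mult_right_mono)
  finally have "\<bar>v \<bullet> v - w \<bullet> v\<bar> \<le> s * (w \<bullet> v)" using s by (rule inner_relative_error)
  moreover have "v \<bullet> v = g \<bullet> (matrix_inv H *v g)"
    using symmetric_matrix_inner[OF symR, of "R *v g" g] by (simp add: v_def RR inner_commute)
  moreover have "w \<bullet> v = g \<bullet> (matrix_inv H' *v g)"
    using symmetric_matrix_inner[OF symR, of w g] by (simp add: v_def Rw inner_commute)
  ultimately show ?thesis by simp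
qed

lemma delta_eq_inverse_form:
  assumes "invertible (hess A Lam nu)"
  shows "delta A Lam nu b x
    = (1/2) * (grad_f A Lam nu b x \<bullet> (matrix_inv (hess A Lam nu) *v grad_f A Lam nu b x))"
proof -
  let ?H = "hess A Lam nu" and ?g = "grad_f A Lam nu b x"
  note cancel = invertible_matrix_inv_cancel[OF assms]
  have "x - xstar A Lam nu b = matrix_inv ?H *v ?g"
    by (simp add: xstar_def grad_f_def matrix_vector_mult_diff_distrib cancel)
  then show ?thesis by (simp add: delta_def cancel inner_commute)
qed

lemma delta_relative_error:
  assumes "diag_mat Lam" "\<forall>i. Lam $ i $ i \<ge> 1" "nu > 0"
    and "0 \<le> rho" "rho \<le> 1" and "event_E A Lam nu m rho S"
  shows "\<bar>delta A Lam nu b x - delta_tilde A Lam nu b m S x\<bar>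
    \<le> sqrt rho * delta_tilde A Lam nu b m S x"
proof -
  have "sqrt rho * sqrt rho \<le> sqrt rho"
    using \<open>0 \<le> rho\<close> \<open>rho \<le> 1\<close> by (intro mult_left_le_one_le) auto
  then have "rho \<le> sqrt rho" using \<open>0 \<le> rho\<close> by simp
  then have "spec_norm (C_S A Lam nu m S - mat 1) \<le> sqrt rho"
    using \<open>event_E A Lam nu m rho S\<close> by (simp add: event_E_def)
  let ?g = "grad_f A Lam nu b x"
  let ?p = "?g \<bullet> (matrix_inv (hess A Lam nu) *v ?g)"
    and ?q = "?g \<bullet> (matrix_inv (hess_S A Lam nu m S) *v ?g)"
  have bound: "\<bar>?p - ?q\<bar> \<le> sqrt rho * ?q"
    using \<open>spec_norm _ \<le> _\<close> \<open>0 \<le> rho\<close> \<open>rho \<le> 1\<close>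
    by (intro inverse_form_relative_error pos_def_mat_hess pos_def_mat_hess_S assms)
      (simp_all add: C_S_def Let_def)
  have delta: "delta A Lam nu b x = ?p / 2"
    by (simp add: delta_eq_inverse_form pos_def_mat_invertible pos_def_mat_hess assms)
  have delta_tilde: "delta_tilde A Lam nu b m S x = ?q / 2"
    by (simp add: delta_tilde_def Let_def)
  show ?thesis unfolding delta delta_tilde using bound by (simp add: abs_le_iff field_simps)
qed

lemma prob_atleast_mono:
  "prob_atleast M E p \<Longrightarrow> E \<subseteq> E' \<Longrightarrow> prob_atleast M E' p"
  unfolding prob_atleast_def by blast

lemma prob_atleast_event_at_crit_ratio:
  assumes "crit_set A Lam nu D dl \<noteq> {}" and "crit_size A Lam nu D dl < m"
  shows "prob_atleast (D m)
    {S. event_E A Lam nu m (crit_size A Lam nu D dl / m) S} (1 - dl)"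
proof -
  let ?k = "crit_size A Lam nu D dl"
  have "?k \<in> crit_set A Lam nu D dl"
    unfolding crit_size_def using assms(1) by (rule Inf_nat_def1)
  then have "1 \<le> ?k" and crit: "\<And>rho m. 0 < rho \<Longrightarrow> 1 \<le> m \<Longrightarrow> real ?k / rho \<le> real m \<Longrightarrow>
      prob_atleast (D m) {S. event_E A Lam nu m rho S} (1 - dl)"
    by (auto simp: crit_set_def)
  with assms(2) show ?thesis by (intro crit) auto
qed

theorem lemma2p1:
  fixes A :: "real^'d^'n" and b :: "real^'d" and Lam :: "real^'d^'d" and nu :: real
  assumes "CARD('d) \<le> CARD('n)"
    and "diag_mat Lam" and "\<forall>i. Lam $ i $ i \<ge> 1"
    and "nu > 0"
  shows "(\<forall>rho m S. 0 < rho \<and> rho < 1 \<and> event_E A Lam nu m rho S \<longrightarrow>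
            (\<forall>x. \<bar>delta A Lam nu b x - delta_tilde A Lam nu b m S x\<bar>
                   \<le> sqrt rho * delta_tilde A Lam nu b m S x))
       \<and> (\<forall>D dl m. (\<forall>k. prob_space (D k)) \<and> 0 < dl \<and> dl < 1
            \<and> crit_set A Lam nu D dl \<noteq> {} \<and> m > crit_size A Lam nu D dl \<longrightarrow>
            prob_atleast (D m)
              {S. \<forall>x. \<bar>delta A Lam nu b x - delta_tilde A Lam nu b m S x\<bar>
                   \<le> sqrt (real (crit_size A Lam nu D dl) / real m) * delta_tilde A Lam nu b m S x}
              (1 - dl))"
proof (intro conjI allI impI)
  fix rho m S x
  assume "0 < rho \<and> rho < 1 \<and> event_E A Lam nu m rho S"
  then show "\<bar>delta A Lam nu b x - delta_tilde A Lam nu b m S x\<bar>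
      \<le> sqrt rho * delta_tilde A Lam nu b m S x"
    by (intro delta_relative_error assms(2-4)) auto
next
  fix D dl m
  assume "(\<forall>k. prob_space (D k)) \<and> 0 < dl \<and> dl < 1
    \<and> crit_set A Lam nu D dl \<noteq> {} \<and> m > crit_size A Lam nu D dl"
  then have "crit_set A Lam nu D dl \<noteq> {}" and km: "crit_size A Lam nu D dl < m" by auto
  then show "prob_atleast (D m)
      {S. \<forall>x. \<bar>delta A Lam nu b x - delta_tilde A Lam nu b m S x\<bar>
        \<le> sqrt (real (crit_size A Lam nu D dl) / real m) * delta_tilde A Lam nu b m S x}
      (1 - dl)"
    by (rule prob_atleast_mono[OF prob_atleast_event_at_crit_ratio])
      (use km in \<open>auto intro!: delta_relative_error assms(2-4)\<close>)
qed

end
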